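(* Let $\mathcal{R}$ be a probabilistic term rewrite system (PTRS) and let $\mathcal{A}(\mathcal{R})$ denote its set of canonical annotated dependency pairs. Then for every basic term $t \in \mathcal{T}_B(\mathcal{R})$ we have \[ \operatorname{edh}_{\mathcal{R}}(t) = \operatorname{edh}_{\langle \mathcal{A}(\mathcal{R}), \mathcal{A}(\mathcal{R}) \rangle}(t), \] and consequently $\iota_{\mathcal{R}} = \iota_{\langle \mathcal{A}(\mathcal{R}), \mathcal{A}(\mathcal{R}) \rangle}$.
   Context: Terms: $\Sigma$ is a finite signature, $\mathcal{V}$ a set of variables, $\mathcal{T}=\mathcal{T}(\Sigma,\mathcal{V})$ the terms; $t|_\pi$ is the subterm at position $\pi$, $t[r]_\pi$ the replacement, $\operatorname{root}(t)$ the root symbol, $\mathcal{V}(t)$ the variables of $t$, and $|t|$ the number of occurrences of function symbols and variables in $t$. A PTRS $\mathcal{R}$ is a finite set of rules $\ell \to \{p_1:r_1,\dots,p_k:r_k\}$ with $\ell\in\mathcal{T}\setminus\mathcal{V}$, $r_j\in\mathcal{T}$, $0<p_j\le 1$, $\sum_j p_j=1$ (a finite multiset of pairs), and $\mathcal{V}(r_j)\subseteq\mathcal{V}(\ell)$. Defined symbols $\mathcal{D}=\{\operatorname{root}(\ell)\mid \ell\to\mu\in\mathcal{R}\}$, constructors $\mathcal{C}=\Sigma\setminus\mathcal{D}$. A term $f(t_1,\dots,t_k)$ is basic if $f\in\mathcal{D}$ and all $t_i\in\mathcal{T}(\mathcal{C},\mathcal{V})$; $\mathcal{T}_B(\mathcal{R})$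 is the set of basic terms. Innermost rewriting: $s \to_{\mathcal{R}} \{p_1:s[r_1\sigma]_\pi,\dots,p_k:s[r_k\sigma]_\pi\}$ if there are a position $\pi$, a rule $\ell\to\{p_1:r_1,\dots,p_k:r_k\}\in\mathcal{R}$ and a substitution $\sigma$ with $s|_\pi=\ell\sigma$ and every proper subterm of $\ell\sigma$ is a normal form w.r.t. $\mathcal{R}$. A rewrite sequence tree (RST) is a (possibly infinite) directed tree with finitely many children per node, each node $v$ labeled $(p_v:t_v)$ with $p_v\in(0,1]$, $t_v\in\mathcal{T}$, root probability $1$, such that if $v$ has children $w_1,\dots,w_k$ ($k\ge1$) then $t_v \to_{\mathcal{R}} \{\tfrac{p_{w_1}}{p_v}:t_{w_1},\dots,\tfrac{p_{w_k}}{p_v}:t_{w_k}\}$ (innermost). For an RST $\mathfrak{T}$, $\operatorname{edl}(\mathfrak{T})=\sum_{v \text{ inner node}} p_v$; $\operatorname{edh}_{\mathcal{R}}(t)=\sup\{\operatorname{edl}(\mathfrak{T})\mid \mathfrak{T}$ an RST with root term $t\}$; $\operatorname{eirc}_{\mathcal{R}}(n)=\sup\{\operatorname{edh}_{\mathcal{R}}(t)\mid t\in\mathcal{T}_B(\mathcal{R}),|t|\le n\}$, and $\iota_{\mathcal{R}}=\iota(\operatorname{eirc}_{\mathcal{R}})$. Complexities: $\mathfrak{C}=\{\mathrm{Pol}_0,\mathrm{Pol}_1,\mathrm{Pol}_2,\dots,\mathrm{Exp},\mathrm{2\text{-}Exp},\mathrm{Fin},\omega\}$ ordered $\mathrm{Pol}_0\sqsubset\mathrm{Pol}_1\sqsubset\dots\sqsubset\mathrm{Exp}\sqsubset\mathrm{2\text{-}Exp}\sqsubset\mathrm{Fin}\sqsubset\omega$.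 For $f:\mathbb{N}\to\mathbb{N}\cup\{\omega\}$: $\iota(f)=\mathrm{Pol}_a$ for the smallest $a$ with $f(n)\in O(n^a)$; otherwise $\mathrm{Exp}$ if $f(n)\in O(2^{\mathrm{pol}(n)})$ for a polynomial $\mathrm{pol}$; otherwise $\mathrm{2\text{-}Exp}$ if $f(n)\in O(2^{2^{\mathrm{pol}(n)}})$; otherwise $\mathrm{Fin}$ if $f(n)\neq\omega$ for all $n$; otherwise $\omega$. Annotations: for each $f\in\mathcal{D}$ a fresh symbol $f^\sharp$ of the same arity; $\mathcal{T}^\sharp$ are terms over $\Sigma\cup\{f^\sharp\mid f\in\mathcal{D}\}$. For $t=f(t_1,\dots,t_k)$ with $f\in\mathcal{D}$, $t^\sharp=f^\sharp(t_1,\dots,t_k)$. $\flat(t)$ removes all annotations; $\sharp_{\mathcal{D}}(t)$ annotates every defined symbol of $t$; $\flat^{\uparrow}_\pi(t)$ removes all annotations strictly above position $\pi$. An annotated dependency pair (ADP) is $\ell\to\{p_1:r_1,\dots,p_k:r_k\}^m$ with $\ell\in\mathcal{T}\setminus\mathcal{V}$, $r_j\in\mathcal{T}^\sharp$, $\mathcal{V}(r_j)\subseteq\mathcal{V}(\ell)$, probabilities as before, and flag $m\in\{\mathsf{true},\mathsf{false}\}$. The canonical ADP of a rule $\ell\to\{p_1:r_1,\dots,p_k:r_k\}$ is $\ell\to\{p_1:\sharp_{\mathcal{D}}(r_1),\dots,p_k:\sharp_{\mathcal{D}}(r_k)\}^{\mathsf{true}}$ and $\mathcal{A}(\mathcal{R})$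 is the set of canonical ADPs of all rules of $\mathcal{R}$. For a set $\mathcal{P}$ of ADPs, defined symbols, constructors and basic terms are defined via the left-hand sides as for PTRSs. Rewriting with a finite set $\mathcal{P}$ of ADPs: $s\in\mathcal{T}^\sharp$ rewrites to $\{p_1:t_1,\dots,p_k:t_k\}$ if there is a position $\pi$ of $s$ carrying a defined or annotated symbol, an ADP $\ell\to\{p_1:r_1,\dots,p_k:r_k\}^m\in\mathcal{P}$ and $\sigma$ with $\flat(s|_\pi)=\ell\sigma$ and all proper subterms of $\ell\sigma$ are normal forms w.r.t. this rewrite relation, and: (at) if $m=\mathsf{true}$ and $s$ is annotated at $\pi$: $t_j=s[r_j\sigma]_\pi$; (nt) if $m=\mathsf{true}$ and not annotated at $\pi$: $t_j=s[\flat(r_j)\sigma]_\pi$; (af) if $m=\mathsf{false}$ and annotated at $\pi$: $t_j=\flat^\uparrow_\pi(s[r_j\sigma]_\pi)$; (nf) if $m=\mathsf{false}$ and not annotated: $t_j=\flat^\uparrow_\pi(s[\flat(r_j)\sigma]_\pi)$. A $\mathcal{P}$-chain tree is defined like an RST but with terms in $\mathcal{T}^\sharp$ and steps of this relation; for an inner node $v$ one records the used ADP and kind of step. For $\mathcal{S}\subseteq\mathcal{P}$, $\operatorname{edl}_{\langle\mathcal{P},\mathcal{S}\rangle}(\mathfrak{T})$ is the sum of $p_v$ over inner nodes $v$ rewritten by an (at)- or (af)-step with an ADP from $\mathcal{S}$; for a basic term $t$, $\operatorname{edh}_{\langle\mathcal{P},\mathcal{S}\rangle}(t)$ is the supremum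 of $\operatorname{edl}_{\langle\mathcal{P},\mathcal{S}\rangle}(\mathfrak{T})$ over all $\mathcal{P}$-chain trees whose root term is $t^\sharp$; $\operatorname{eirc}_{\langle\mathcal{P},\mathcal{S}\rangle}(n)=\sup\{\operatorname{edh}_{\langle\mathcal{P},\mathcal{S}\rangle}(t)\mid t$ basic w.r.t. $\mathcal{P}$, $|t|\le n\}$ and $\iota_{\langle\mathcal{P},\mathcal{S}\rangle}=\iota(\operatorname{eirc}_{\langle\mathcal{P},\mathcal{S}\rangle})$. *)

theory Defs
  imports "HOL-Analysis.Analysis" "HOL-Library.Multiset" "HOL-Computational_Algebra.Polynomial"
begin

text \<open>Function symbols of type 'f; a symbol of the signature is a pair (f, arity),
  as in IsaFoR. Annotated terms are terms over symbols 'f \<times> bool, where (f, True)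
  stands for the annotated symbol f#.\<close>

datatype ('f, 'v) trm = Var 'v | Fun 'f "('f, 'v) trm list"

fun tsize :: "('f, 'v) trm \<Rightarrow> nat" where
  "tsize (Var x) = 1"
| "tsize (Fun f ts) = Suc (sum_list (map tsize ts))"

fun vars :: "('f, 'v) trm \<Rightarrow> 'v set" where
  "vars (Var x) = {x}"
| "vars (Fun f ts) = (\<Union>t\<in>set ts. vars t)"

fun funs :: "('f, 'v) trm \<Rightarrow> ('f \<times> nat) set" where
  "funs (Var x) = {}"
| "funs (Fun f ts) = insert (f, length ts) (\<Union>t\<in>set ts. funs t)"

fun subst :: "('f, 'v) trm \<Rightarrow> ('v \<Rightarrow> ('f, 'v) trm) \<Rightarrow> ('f, 'v) trm" where
  "subst (Var x) \<sigma> = \<sigma> x"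
| "subst (Fun f ts) \<sigma> = Fun f (map (\<lambda>t. subst t \<sigma>) ts)"

function poss :: "('f, 'v) trm \<Rightarrow> nat list set" where
  "poss (Var x) = {[]}"
| "poss (Fun f ts) = insert [] (\<Union>i \<in> {..<length ts}. Cons i ` poss (ts ! i))"
  by pat_completeness auto
termination
  by (relation "Wellfounded.measure size") (auto simp: less_Suc_eq_le intro!: size_list_estimation' nth_mem)

fun subt_at :: "('f, 'v) trm \<Rightarrow> nat list \<Rightarrow> ('f, 'v) trm" where
  "subt_at t [] = t"
| "subt_at (Var x) (i # q) = Var x"
| "subt_at (Fun f ts) (i # q) = subt_at (ts ! i) q"

function replace_at :: "('f, 'v) trm \<Rightarrow> nat list \<Rightarrow> ('f, 'v) trm \<Rightarrow> ('f, 'v) trm" where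
  "replace_at t [] s = s"
| "replace_at (Var x) (i # q) s = Var x"
| "replace_at (Fun f ts) (i # q) s =
     (if i < length ts then Fun f (ts[i := replace_at (ts ! i) q s]) else Fun f ts)"
  by pat_completeness auto
termination
  by (relation "Wellfounded.measure (\<lambda>(t, q, s). size t)") (auto simp: less_Suc_eq_le intro!: size_list_estimation' nth_mem)

definition proper_subterms :: "('f, 'v) trm \<Rightarrow> ('f, 'v) trm set" where
  "proper_subterms t = {subt_at t q | q. q \<in> poss t \<and> q \<noteq> []}"

type_synonym ('f, 'v) prule = "('f, 'v) trm \<times> (real \<times> ('f, 'v) trm) multiset"

definition ptrs :: "('f \<times> nat) set \<Rightarrow> ('f, 'v) prule set \<Rightarrow> bool" where
  "ptrs F R \<longleftrightarrow> finite R \<and>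
    (\<forall>(l, \<mu>) \<in> R. (\<exists>f ts. l = Fun f ts) \<and> funs l \<subseteq> F \<and> \<mu> \<noteq> {#} \<and>
        (\<forall>(p, r) \<in> set_mset \<mu>. 0 < p \<and> p \<le> 1 \<and> vars r \<subseteq> vars l \<and> funs r \<subseteq> F) \<and>
        sum_mset (image_mset fst \<mu>) = 1)"

definition defined :: "('f, 'v) prule set \<Rightarrow> ('f \<times> nat) set" where
  "defined R = {(f, length ts) | f ts \<mu>. (Fun f ts, \<mu>) \<in> R}"

definition basic_terms :: "('f \<times> nat) set \<Rightarrow> ('f \<times> nat) set \<Rightarrow> ('f, 'v) trm set" where
  "basic_terms F D = {Fun f ts | f ts. (f, length ts) \<in> D \<and> funs (Fun f ts) \<subseteq> F \<and>
        (\<forall>u \<in> set ts. funs u \<inter> D = {})}"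

text \<open>Unrestricted rewrite step (used only to define normal forms; innermost and
  unrestricted rewriting have the same normal forms).\<close>
definition rstep_full :: "('f, 'v) prule set \<Rightarrow> ('f, 'v) trm \<Rightarrow> (real \<times> ('f, 'v) trm) multiset \<Rightarrow> bool" where
  "rstep_full R s \<nu> \<longleftrightarrow> (\<exists>\<pi> \<in> poss s. \<exists>l \<mu> \<sigma>. (l, \<mu>) \<in> R \<and> subt_at s \<pi> = subst l \<sigma> \<and>
      \<nu> = image_mset (\<lambda>(p, r). (p, replace_at s \<pi> (subst r \<sigma>))) \<mu>)"

definition NF :: "('f, 'v) prule set \<Rightarrow> ('f, 'v) trm \<Rightarrow> bool" where
  "NF R u \<longleftrightarrow> \<not> (\<exists>\<nu>. rstep_full R u \<nu>)"

definition istep :: "('f, 'v) prule set \<Rightarrow> ('f, 'v) trm \<Rightarrow> (real \<times> ('f, 'v) trm) multiset \<Rightarrow> bool" where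
  "istep R s \<nu> \<longleftrightarrow> (\<exists>\<pi> \<in> poss s. \<exists>l \<mu> \<sigma>. (l, \<mu>) \<in> R \<and> subt_at s \<pi> = subst l \<sigma> \<and>
      (\<forall>u \<in> proper_subterms (subst l \<sigma>). NF R u) \<and>
      \<nu> = image_mset (\<lambda>(p, r). (p, replace_at s \<pi> (subst r \<sigma>))) \<mu>)"

text \<open>A (possibly infinite) tree with finitely many children per node: nodes are
  addresses (nat lists), the children of v are v@[i] for i < k v.\<close>
definition tree_shape :: "nat list set \<Rightarrow> (nat list \<Rightarrow> nat) \<Rightarrow> bool" where
  "tree_shape N k \<longleftrightarrow> [] \<in> N \<and> (\<forall>v i. v @ [i] \<in> N \<longleftrightarrow> v \<in> N \<and> i < k v)"

definition children_mset :: "(nat list \<Rightarrow> real) \<Rightarrow> (nat list \<Rightarrow> 'a) \<Rightarrow> (nat list \<Rightarrow> nat) \<Rightarrow> nat list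
     \<Rightarrow> (real \<times> 'a) multiset" where
  "children_mset p t k v = mset (map (\<lambda>i. (p (v @ [i]) / p v, t (v @ [i]))) [0..<k v])"

definition RST :: "('f, 'v) prule set \<Rightarrow> nat list set \<Rightarrow> (nat list \<Rightarrow> real) \<Rightarrow>
     (nat list \<Rightarrow> ('f, 'v) trm) \<Rightarrow> (nat list \<Rightarrow> nat) \<Rightarrow> bool" where
  "RST R N p t k \<longleftrightarrow> tree_shape N k \<and> p [] = 1 \<and> (\<forall>v \<in> N. 0 < p v \<and> p v \<le> 1) \<and>
     (\<forall>v \<in> N. 1 \<le> k v \<longrightarrow> istep R (t v) (children_mset p t k v))"

definition edl :: "nat list set \<Rightarrow> (nat list \<Rightarrow> real) \<Rightarrow> (nat list \<Rightarrow> nat) \<Rightarrow> ennreal" where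
  "edl N p k = (\<Sum>\<^sub>\<infinity> v \<in> {v \<in> N. 1 \<le> k v}. ennreal (p v))"

definition edh :: "('f, 'v) prule set \<Rightarrow> ('f, 'v) trm \<Rightarrow> ennreal" where
  "edh R s = (SUP x \<in> {(N, p, t, k). RST R N p t k \<and> t [] = s}.
                 (case x of (N, p, t, k) \<Rightarrow> edl N p k))"

definition eirc :: "('f \<times> nat) set \<Rightarrow> ('f, 'v) prule set \<Rightarrow> nat \<Rightarrow> ennreal" where
  "eirc F R n = (SUP t \<in> {t \<in> basic_terms F (defined R). tsize t \<le> n}. edh R t)"

datatype complexity = Pol nat | Exp | TwoExp | Fin | Omega

definition bigO :: "(nat \<Rightarrow> ennreal) \<Rightarrow> (nat \<Rightarrow> real) \<Rightarrow> bool" where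
  "bigO f g \<longleftrightarrow> (\<exists>c > 0. \<exists>n0. \<forall>n \<ge> n0. f n \<le> ennreal (c * g n))"

definition iota :: "(nat \<Rightarrow> ennreal) \<Rightarrow> complexity" where
  "iota f = (if \<exists>a. bigO f (\<lambda>n. real n ^ a) then Pol (LEAST a. bigO f (\<lambda>n. real n ^ a))
     else if \<exists>pl :: real poly. bigO f (\<lambda>n. 2 powr poly pl (real n)) then Exp
     else if \<exists>pl :: real poly. bigO f (\<lambda>n. 2 powr (2 powr poly pl (real n))) then TwoExp
     else if \<forall>n. f n \<noteq> \<infinity> then Fin
     else Omega)"

definition lift :: "('f, 'v) trm \<Rightarrow> ('f \<times> bool, 'v) trm" where
  "lift t = map_trm (\<lambda>f. (f, False)) id t"

definition flat :: "('f \<times> bool, 'v) trm \<Rightarrow> ('f, 'v) trm" where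
  "flat t = map_trm fst id t"

fun sharp_root :: "('f, 'v) trm \<Rightarrow> ('f \<times> bool, 'v) trm" where
  "sharp_root (Var x) = Var x"
| "sharp_root (Fun f ts) = Fun (f, True) (map lift ts)"

fun sharpD :: "('f \<times> nat) set \<Rightarrow> ('f, 'v) trm \<Rightarrow> ('f \<times> bool, 'v) trm" where
  "sharpD D (Var x) = Var x"
| "sharpD D (Fun f ts) = Fun (f, (f, length ts) \<in> D) (map (sharpD D) ts)"

fun unannot_above :: "nat list \<Rightarrow> ('f \<times> bool, 'v) trm \<Rightarrow> ('f \<times> bool, 'v) trm" where
  "unannot_above [] s = s"
| "unannot_above (i # q) (Var x) = Var x"
| "unannot_above (i # q) (Fun (f, b) ts) =
     Fun (f, False) (if i < length ts then ts[i := unannot_above q (ts ! i)] else ts)"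

fun annotated :: "('f \<times> bool, 'v) trm \<Rightarrow> bool" where
  "annotated (Var x) = False"
| "annotated (Fun (f, b) ts) = b"

type_synonym ('f, 'v) adp = "('f, 'v) trm \<times> (real \<times> ('f \<times> bool, 'v) trm) multiset \<times> bool"

definition adefined :: "('f, 'v) adp set \<Rightarrow> ('f \<times> nat) set" where
  "adefined P = {(f, length ts) | f ts \<mu> m. (Fun f ts, \<mu>, m) \<in> P}"

definition canonical_adp :: "('f \<times> nat) set \<Rightarrow> ('f, 'v) prule \<Rightarrow> ('f, 'v) adp" where
  "canonical_adp D rl = (case rl of (l, \<mu>) \<Rightarrow> (l, image_mset (\<lambda>(p, r). (p, sharpD D r)) \<mu>, True))"

definition ADPs :: "('f, 'v) prule set \<Rightarrow> ('f, 'v) adp set" where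
  "ADPs R = canonical_adp (defined R) ` R"

text \<open>Result term of an ADP step at position pi with rhs r, flag m, where b says
  whether s is annotated at pi (cases (at), (nt), (af), (nf)).\<close>
definition adp_res :: "bool \<Rightarrow> bool \<Rightarrow> ('f \<times> bool, 'v) trm \<Rightarrow> nat list \<Rightarrow>
     ('f \<times> bool, 'v) trm \<Rightarrow> ('v \<Rightarrow> ('f, 'v) trm) \<Rightarrow> ('f \<times> bool, 'v) trm" where
  "adp_res m b s \<pi> r \<sigma> =
     (let r' = (if b then r else lift (flat r));
          u = replace_at s \<pi> (subst r' (lift \<circ> \<sigma>))
      in if m then u else unannot_above \<pi> u)"

text \<open>A step with the ADP rho at position pi; innermost flag ic selects whether the
  proper subterms of l sigma must be normal forms (NFP).\<close>
definition adp_step_at :: "('f, 'v) adp set \<Rightarrow> (('f \<times> bool, 'v) trm \<Rightarrow> bool) \<Rightarrow>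
     ('f \<times> bool, 'v) trm \<Rightarrow> ('f, 'v) adp \<Rightarrow> bool \<Rightarrow>
     (real \<times> ('f \<times> bool, 'v) trm) multiset \<Rightarrow> bool" where
  "adp_step_at P NFP s \<rho> b \<nu> \<longleftrightarrow> \<rho> \<in> P \<and>
     (\<exists>\<pi> \<in> poss s. \<exists>\<sigma> f b' ts. case \<rho> of (l, \<mu>, m) \<Rightarrow>
        subt_at s \<pi> = Fun (f, b') ts \<and> (b' \<or> (f, length ts) \<in> adefined P) \<and>
        b = annotated (subt_at s \<pi>) \<and>
        flat (subt_at s \<pi>) = subst l \<sigma> \<and>
        (\<forall>u \<in> proper_subterms (subst l \<sigma>). NFP (lift u)) \<and>
        \<nu> = image_mset (\<lambda>(p, r). (p, adp_res m b s \<pi> r \<sigma>)) \<mu>)"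

text \<open>Normal forms of the ADP rewrite relation (unrestricted and innermost
  rewriting have the same normal forms).\<close>
definition adp_NF :: "('f, 'v) adp set \<Rightarrow> ('f \<times> bool, 'v) trm \<Rightarrow> bool" where
  "adp_NF P u \<longleftrightarrow> \<not> (\<exists>\<rho> b \<nu>. adp_step_at P (\<lambda>_. True) u \<rho> b \<nu>)"

definition adp_istep :: "('f, 'v) adp set \<Rightarrow> ('f \<times> bool, 'v) trm \<Rightarrow> ('f, 'v) adp \<Rightarrow> bool \<Rightarrow>
     (real \<times> ('f \<times> bool, 'v) trm) multiset \<Rightarrow> bool" where
  "adp_istep P s \<rho> b \<nu> \<longleftrightarrow> adp_step_at P (adp_NF P) s \<rho> b \<nu>"

text \<open>P-chain trees; lab v records the ADP used at inner node v and whether the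
  step was at an annotated position ((at)/(af)) or not ((nt)/(nf)).\<close>
definition chain_tree :: "('f, 'v) adp set \<Rightarrow> nat list set \<Rightarrow> (nat list \<Rightarrow> real) \<Rightarrow>
     (nat list \<Rightarrow> ('f \<times> bool, 'v) trm) \<Rightarrow> (nat list \<Rightarrow> nat) \<Rightarrow>
     (nat list \<Rightarrow> ('f, 'v) adp \<times> bool) \<Rightarrow> bool" where
  "chain_tree P N p t k lab \<longleftrightarrow> tree_shape N k \<and> p [] = 1 \<and> (\<forall>v \<in> N. 0 < p v \<and> p v \<le> 1) \<and>
     (\<forall>v \<in> N. 1 \<le> k v \<longrightarrow> adp_istep P (t v) (fst (lab v)) (snd (lab v)) (children_mset p t k v))"

definition edl_adp :: "('f, 'v) adp set \<Rightarrow> nat list set \<Rightarrow> (nat list \<Rightarrow> real) \<Rightarrow>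
     (nat list \<Rightarrow> nat) \<Rightarrow> (nat list \<Rightarrow> ('f, 'v) adp \<times> bool) \<Rightarrow> ennreal" where
  "edl_adp S N p k lab =
     (\<Sum>\<^sub>\<infinity> v \<in> {v \<in> N. 1 \<le> k v \<and> snd (lab v) \<and> fst (lab v) \<in> S}. ennreal (p v))"

definition edh_adp :: "('f, 'v) adp set \<Rightarrow> ('f, 'v) adp set \<Rightarrow> ('f, 'v) trm \<Rightarrow> ennreal" where
  "edh_adp P S s = (SUP x \<in> {(N, p, t, k, lab). chain_tree P N p t k lab \<and> t [] = sharp_root s}.
                 (case x of (N, p, t, k, lab) \<Rightarrow> edl_adp S N p k lab))"

definition eirc_adp :: "('f \<times> nat) set \<Rightarrow> ('f, 'v) adp set \<Rightarrow> ('f, 'v) adp set \<Rightarrow> nat \<Rightarrow> ennreal" where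
  "eirc_adp F P S n = (SUP t \<in> {t \<in> basic_terms F (adefined P). tsize t \<le> n}. edh_adp P S t)"

end

theory Submission
  imports Defs
begin

text \<open>Erasing the annotations turns a chain tree of the canonical ADPs, started at t#, into
  a rewrite sequence tree of R with the same shape and probabilities; conversely, the terms of an
  RST started at a basic term t can be annotated along every branch, starting from t# and
  performing each step as an (at)-step with the canonical ADP of the rule used. Both directions
  rest on one invariant of the annotated terms: every subterm with a defined root symbol that is
  not an R-normal form is annotated. It holds for t# because t is basic, and innermost steps
  preserve it because the canonical ADPs annotate all defined symbols of the right-hand sides,
  while the instantiated variables are normal forms. Under the invariant every innermost redex is
  annotated; hence every inner node of a chain tree is an (at)-step, counted in its expected
  derivation length, and corresponding trees have the same edl.\<close>

section \<open>Positions, substitutions and annotations\<close>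

lemma Nil_in_poss[simp]: "[] \<in> poss t"
  by (cases t) auto

lemma ex_poss_Fun:
  "(\<exists>\<pi>\<in>poss (Fun f ts). P (subt_at (Fun f ts) \<pi>)) \<longleftrightarrow>
     P (Fun f ts) \<or> (\<exists>t\<in>set ts. \<exists>\<pi>\<in>poss t. P (subt_at t \<pi>))"
  by (fastforce simp: in_set_conv_nth intro: bexI[of _ "[]"])

lemma poss_map_trm[simp]: "poss (map_trm g h t) = poss t"
  by (induction t) (auto simp: nth_map)

lemma subt_at_map_trm: "q \<in> poss t \<Longrightarrow> subt_at (map_trm g h t) q = map_trm g h (subt_at t q)"
proof (induction q arbitrary: t)
  case (Cons i q)
  then show ?case by (cases t) auto
qed simp

lemma replace_at_map_trm:
  "replace_at (map_trm g h t) q (map_trm g h s) = map_trm g h (replace_at t q s)"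
proof (induction q arbitrary: t)
  case (Cons i q)
  then show ?case by (cases t) (auto simp: map_update)
qed simp

lemma map_trm_subst: "map_trm g id (subst t \<sigma>) = subst (map_trm g id t) (map_trm g id \<circ> \<sigma>)"
  by (induction t) auto

lemma lift_simps[simp]:
  "lift (Var x) = Var x"
  "lift (Fun f ts) = Fun (f, False) (map lift ts)"
  unfolding lift_def by simp_all

lemma flat_simps[simp]:
  "flat (Var x) = Var x"
  "flat (Fun fb ts) = Fun (fst fb) (map flat ts)"
  unfolding flat_def by simp_all

lemma flat_lift[simp]: "flat (lift t) = t"
  unfolding flat_def lift_def by (simp add: trm.map_comp comp_def trm.map_ident)

lemma flat_sharpD[simp]: "flat (sharpD D r) = r"
  by (induction r) (auto intro: map_idI)

lemma flat_sharp_root[simp]: "flat (sharp_root s) = s"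
  by (cases s) (auto intro: map_idI)

lemma poss_flat[simp]: "poss (flat t) = poss t"
  unfolding flat_def by (rule poss_map_trm)

lemma poss_lift[simp]: "poss (lift t) = poss t"
  unfolding lift_def by (rule poss_map_trm)

lemma subt_at_flat: "q \<in> poss t \<Longrightarrow> subt_at (flat t) q = flat (subt_at t q)"
  unfolding flat_def by (rule subt_at_map_trm)

lemma subt_at_lift: "q \<in> poss t \<Longrightarrow> subt_at (lift t) q = lift (subt_at t q)"
  unfolding lift_def by (rule subt_at_map_trm)

lemma flat_replace_at[simp]: "flat (replace_at t q s) = replace_at (flat t) q (flat s)"
  unfolding flat_def by (rule replace_at_map_trm[symmetric])

lemma flat_subst_lift[simp]: "flat (subst r (lift \<circ> \<sigma>)) = subst (flat r) \<sigma>"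
  unfolding flat_def by (simp add: map_trm_subst comp_def flat_def[symmetric])

lemma flat_eq_subst_FunE:
  assumes "flat u = subst (Fun f ls) \<sigma>"
  obtains b ts where "u = Fun (f, b) ts" "length ts = length ls"
  using assms by (cases u) (auto dest: map_eq_imp_length_eq)

section \<open>Normal forms\<close>

lemma NF_iff_no_redex:
  "NF R u \<longleftrightarrow> \<not> (\<exists>\<pi>\<in>poss u. \<exists>l \<mu> \<sigma>. (l, \<mu>) \<in> R \<and> subt_at u \<pi> = subst l \<sigma>)"
  unfolding NF_def rstep_full_def by blast

lemma NF_Fun:
  "NF R (Fun f ts) \<longleftrightarrow>
     \<not> (\<exists>l \<mu> \<sigma>. (l, \<mu>) \<in> R \<and> Fun f ts = subst l \<sigma>) \<and> (\<forall>t\<in>set ts. NF R t)"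
  using ex_poss_Fun[of f ts "\<lambda>u. \<exists>l \<mu> \<sigma>. (l, \<mu>) \<in> R \<and> u = subst l \<sigma>"]
  unfolding NF_iff_no_redex by blast

lemma NF_subt_at: "q \<in> poss u \<Longrightarrow> NF R u \<Longrightarrow> NF R (subt_at u q)"
proof (induction q arbitrary: u)
  case (Cons i q)
  then show ?case by (cases u) (auto simp: NF_Fun)
qed simp

lemma not_NF_subst_lhs: "(l, \<mu>) \<in> R \<Longrightarrow> \<not> NF R (subst l \<sigma>)"
  unfolding NF_iff_no_redex by (metis Nil_in_poss subt_at.simps(1))

lemma NF_subst_imp_NF_var: "NF R (subst t \<sigma>) \<Longrightarrow> x \<in> vars t \<Longrightarrow> NF R (\<sigma> x)"
  by (induction t) (auto simp: NF_Fun)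

lemma proper_subterms_NF_imp_NF_var:
  assumes "\<forall>u\<in>proper_subterms (subst (Fun f ls) \<sigma>). NF R u" and "x \<in> vars (Fun f ls)"
  shows "NF R (\<sigma> x)"
proof -
  obtain i where i: "i < length ls" "x \<in> vars (ls ! i)"
    using assms(2) by (auto simp: in_set_conv_nth)
  have "[i] \<in> poss (subst (Fun f ls) \<sigma>)"
    using i(1) by (auto intro!: bexI[of _ i] image_eqI[where x = "[]"])
  then have "subst (ls ! i) \<sigma> \<in> proper_subterms (subst (Fun f ls) \<sigma>)"
    unfolding proper_subterms_def using i(1) by (intro CollectI exI[of _ "[i]"]) auto
  with assms(1) i(2) show ?thesis
    by (blast intro: NF_subst_imp_NF_var)
qed

lemma ptrs_lhs_Fun: "ptrs F R \<Longrightarrow> (l, \<mu>) \<in> R \<Longrightarrow> \<exists>f ls. l = Fun f ls"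
  unfolding ptrs_def by fast

lemma ptrs_rhs_vars: "ptrs F R \<Longrightarrow> (l, \<mu>) \<in> R \<Longrightarrow> (q, r) \<in># \<mu> \<Longrightarrow> vars r \<subseteq> vars l"
  unfolding ptrs_def by fast

section \<open>Canonical annotated dependency pairs\<close>

lemma adefined_ADPs[simp]: "adefined (ADPs R) = defined R"
  unfolding adefined_def ADPs_def canonical_adp_def defined_def by force

lemma ADPsE:
  assumes "\<rho> \<in> ADPs R"
  obtains l \<mu> where "(l, \<mu>) \<in> R" "\<rho> = canonical_adp (defined R) (l, \<mu>)"
  using assms unfolding ADPs_def by auto

lemma canonical_adp_in_ADPs: "(l, \<mu>) \<in> R \<Longrightarrow> canonical_adp (defined R) (l, \<mu>) \<in> ADPs R"
  unfolding ADPs_def by blast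

lemma adp_step_at_canonicalI:
  assumes "ptrs F R" and "(l, \<mu>) \<in> R" and "\<pi> \<in> poss s" and "flat (subt_at s \<pi>) = subst l \<sigma>"
    and "\<forall>u\<in>proper_subterms (subst l \<sigma>). NFP (lift u)"
  shows "adp_step_at (ADPs R) NFP s (canonical_adp (defined R) (l, \<mu>)) (annotated (subt_at s \<pi>))
     (image_mset (\<lambda>(q, r).
        (q, adp_res True (annotated (subt_at s \<pi>)) s \<pi> (sharpD (defined R) r) \<sigma>)) \<mu>)"
proof -
  obtain f ls where l: "l = Fun f ls"
    using ptrs_lhs_Fun[OF assms(1,2)] by blast
  obtain b ts where sub: "subt_at s \<pi> = Fun (f, b) ts" "length ts = length ls"
    using assms(4) unfolding l by (rule flat_eq_subst_FunE)
  have "(f, length ts) \<in> adefined (ADPs R)"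
    using assms(2) sub(2) unfolding l adefined_ADPs defined_def by auto
  then show ?thesis
    unfolding adp_step_at_def
    by (intro conjI canonical_adp_in_ADPs[OF assms(2)] bexI[OF _ assms(3)]
        exI[of _ \<sigma>] exI[of _ f] exI[of _ b] exI[of _ ts])
      (use assms(4,5) sub(1) in \<open>auto simp: canonical_adp_def multiset.map_comp
        intro!: image_mset_cong\<close>)
qed

lemma adp_step_at_ADPsE:
  assumes step: "adp_step_at (ADPs R) NFP s \<rho> b \<nu>"
  obtains l \<mu> \<pi> \<sigma> where "(l, \<mu>) \<in> R" "\<rho> = canonical_adp (defined R) (l, \<mu>)" "\<pi> \<in> poss s"
    "b = annotated (subt_at s \<pi>)" "flat (subt_at s \<pi>) = subst l \<sigma>"
    "\<forall>u\<in>proper_subterms (subst l \<sigma>). NFP (lift u)"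
    "\<nu> = image_mset (\<lambda>(q, r). (q, adp_res True b s \<pi> (sharpD (defined R) r) \<sigma>)) \<mu>"
proof -
  from step obtain l \<mu> where lm: "(l, \<mu>) \<in> R" "\<rho> = canonical_adp (defined R) (l, \<mu>)"
    unfolding adp_step_at_def by (blast elim: ADPsE)
  from step obtain \<pi> \<sigma> where "\<pi> \<in> poss s" "b = annotated (subt_at s \<pi>)"
    "flat (subt_at s \<pi>) = subst l \<sigma>" "\<forall>u\<in>proper_subterms (subst l \<sigma>). NFP (lift u)"
    "\<nu> = image_mset (\<lambda>(q, r). (q, adp_res True b s \<pi> r \<sigma>))
       (image_mset (\<lambda>(q, r). (q, sharpD (defined R) r)) \<mu>)"
    unfolding adp_step_at_def lm(2) canonical_adp_def by auto
  moreover have "image_mset (\<lambda>(q, r). (q, adp_res True b s \<pi> r \<sigma>))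
       (image_mset (\<lambda>(q, r). (q, sharpD (defined R) r)) \<mu>) =
     image_mset (\<lambda>(q, r). (q, adp_res True b s \<pi> (sharpD (defined R) r) \<sigma>)) \<mu>"
    by (auto simp: multiset.map_comp intro!: image_mset_cong)
  ultimately show ?thesis
    using that lm by metis
qed

lemma adp_NF_lift_iff:
  assumes "ptrs F R"
  shows "adp_NF (ADPs R) (lift u) \<longleftrightarrow> NF R u"
proof
  assume adp_NF: "adp_NF (ADPs R) (lift u)"
  show "NF R u"
  proof (rule ccontr)
    assume "\<not> NF R u"
    then obtain \<pi> l \<mu> \<sigma> where "\<pi> \<in> poss u" "(l, \<mu>) \<in> R" "subt_at u \<pi> = subst l \<sigma>"
      unfolding NF_iff_no_redex by blast
    then have "adp_step_at (ADPs R) (\<lambda>_. True) (lift u) (canonical_adp (defined R) (l, \<mu>))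
        (annotated (subt_at (lift u) \<pi>))
        (image_mset (\<lambda>(q, r). (q, adp_res True (annotated (subt_at (lift u) \<pi>)) (lift u) \<pi>
          (sharpD (defined R) r) \<sigma>)) \<mu>)"
      by (intro adp_step_at_canonicalI[OF assms]) (auto simp: subt_at_lift)
    with adp_NF show False
      unfolding adp_NF_def by blast
  qed
next
  assume "NF R u"
  show "adp_NF (ADPs R) (lift u)"
    unfolding adp_NF_def
  proof clarify
    fix \<rho> b \<nu>
    assume "adp_step_at (ADPs R) (\<lambda>_. True) (lift u) \<rho> b \<nu>"
    then obtain l \<mu> \<pi> \<sigma> where "(l, \<mu>) \<in> R" "\<pi> \<in> poss u" "flat (subt_at (lift u) \<pi>) = subst l \<sigma>"
      by (elim adp_step_at_ADPsE) auto
    with \<open>NF R u\<close> show False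
      unfolding NF_iff_no_redex by (auto simp: subt_at_lift)
  qed
qed

section \<open>The annotation invariant\<close>

fun well_annotated :: "('f \<times> nat) set \<Rightarrow> ('f, 'v) prule set \<Rightarrow> ('f \<times> bool, 'v) trm \<Rightarrow> bool" where
  "well_annotated D R (Var x) \<longleftrightarrow> True"
| "well_annotated D R (Fun (f, b) ts) \<longleftrightarrow>
     ((f, length ts) \<in> D \<and> \<not> NF R (flat (Fun (f, b) ts)) \<longrightarrow> b) \<and> (\<forall>t\<in>set ts. well_annotated D R t)"

lemma well_annotated_Fun:
  "well_annotated D R (Fun fb ts) \<longleftrightarrow>
     ((fst fb, length ts) \<in> D \<and> \<not> NF R (flat (Fun fb ts)) \<longrightarrow> snd fb) \<and>
     (\<forall>t\<in>set ts. well_annotated D R t)"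
  by (cases fb) simp

lemma well_annotated_lift_NF: "NF R u \<Longrightarrow> well_annotated D R (lift u)"
  by (induction u) (auto simp: NF_Fun comp_def)

lemma well_annotated_lift_constructor: "funs u \<inter> D = {} \<Longrightarrow> well_annotated D R (lift u)"
  by (induction u) auto

lemma well_annotated_sharp_root:
  assumes "s \<in> basic_terms F D"
  shows "well_annotated D R (sharp_root s)"
  using assms unfolding basic_terms_def by (auto simp: well_annotated_lift_constructor)

lemma well_annotated_subst_sharpD:
  "(\<forall>x\<in>vars r. NF R (\<sigma> x)) \<Longrightarrow> well_annotated D R (subst (sharpD D r) (lift \<circ> \<sigma>))"
  by (induction r) (auto simp: well_annotated_lift_NF)

lemma well_annotated_subt_at:
  "well_annotated D R s \<Longrightarrow> q \<in> poss s \<Longrightarrow> well_annotated D R (subt_at s q)"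
proof (induction q arbitrary: s)
  case (Cons i q)
  then show ?case
    by (cases s) (auto simp: well_annotated_Fun)
qed simp

text \<open>Every ancestor of \<pi> is reducible, so it is already annotated if its root is defined,
  whatever is put at \<pi>.\<close>
lemma well_annotated_replace_at:
  assumes "well_annotated D R s" and "\<pi> \<in> poss s" and "\<not> NF R (flat (subt_at s \<pi>))"
    and "well_annotated D R u"
  shows "well_annotated D R (replace_at s \<pi> u)"
  using assms
proof (induction \<pi> arbitrary: s)
  case (Cons i q)
  then obtain f b ts where s: "s = Fun (f, b) ts" and i: "i < length ts" "q \<in> poss (ts ! i)"
    by (cases s) auto
  have "\<not> NF R (flat (ts ! i))"
    using Cons.prems(3) NF_subt_at[of q "flat (ts ! i)" R] i by (auto simp: s subt_at_flat)
  then have "\<not> NF R (flat s)"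
    using i by (auto simp: s NF_Fun)
  moreover have "well_annotated D R (replace_at (ts ! i) q u)"
    using Cons i by (auto simp: s)
  ultimately show ?case
    using Cons.prems(1) i by (auto simp: s dest: set_update_subset_insert[THEN subsetD])
qed simp

lemma annotated_redex:
  assumes "ptrs F R" and "well_annotated (defined R) R s" and "\<pi> \<in> poss s"
    and "(l, \<mu>) \<in> R" and "flat (subt_at s \<pi>) = subst l \<sigma>"
  shows "annotated (subt_at s \<pi>)"
proof -
  obtain f ls where l: "l = Fun f ls"
    using ptrs_lhs_Fun[OF assms(1,4)] by blast
  obtain b ts where sub: "subt_at s \<pi> = Fun (f, b) ts" "length ts = length ls"
    using assms(5) unfolding l by (rule flat_eq_subst_FunE)
  have "(f, length ts) \<in> defined R"
    using assms(4) sub(2) unfolding l defined_def by auto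
  moreover have "\<not> NF R (flat (subt_at s \<pi>))"
    using assms(4,5) by (simp add: not_NF_subst_lhs)
  moreover have "well_annotated (defined R) R (subt_at s \<pi>)"
    using assms(2,3) by (rule well_annotated_subt_at)
  ultimately show ?thesis
    by (simp add: sub(1))
qed

text \<open>sharpD annotates every defined symbol of r, and the instantiated variables are
  normal forms because the redex is innermost.\<close>
lemma well_annotated_rewrite:
  assumes "ptrs F R" and "well_annotated D R s" and "\<pi> \<in> poss s"
    and "(l, \<mu>) \<in> R" and "flat (subt_at s \<pi>) = subst l \<sigma>"
    and "\<forall>u\<in>proper_subterms (subst l \<sigma>). NF R u" and "(q, r) \<in># \<mu>"
  shows "well_annotated D R (replace_at s \<pi> (subst (sharpD D r) (lift \<circ> \<sigma>)))"
proof (rule well_annotated_replace_at[OF assms(2,3)])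
  show "\<not> NF R (flat (subt_at s \<pi>))"
    using assms(4,5) by (simp add: not_NF_subst_lhs)
  obtain f ls where l: "l = Fun f ls"
    using ptrs_lhs_Fun[OF assms(1,4)] by blast
  have "\<forall>x\<in>vars r. NF R (\<sigma> x)"
    using assms(6) ptrs_rhs_vars[OF assms(1,4,7)] unfolding l
    by (blast intro: proper_subterms_NF_imp_NF_var)
  then show "well_annotated D R (subst (sharpD D r) (lift \<circ> \<sigma>))"
    by (rule well_annotated_subst_sharpD)
qed

lemma adp_istep_ADPs_well_annotatedE:
  assumes "ptrs F R" and "well_annotated (defined R) R s" and "adp_istep (ADPs R) s \<rho> b \<nu>"
  obtains l \<mu> \<pi> \<sigma> where "(l, \<mu>) \<in> R" "\<rho> = canonical_adp (defined R) (l, \<mu>)" "b"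
    "\<pi> \<in> poss s" "flat (subt_at s \<pi>) = subst l \<sigma>" "\<forall>u\<in>proper_subterms (subst l \<sigma>). NF R u"
    "\<nu> = image_mset (\<lambda>(q, r). (q, replace_at s \<pi> (subst (sharpD (defined R) r) (lift \<circ> \<sigma>)))) \<mu>"
proof -
  from assms(3) obtain l \<mu> \<pi> \<sigma> where step: "(l, \<mu>) \<in> R" "\<rho> = canonical_adp (defined R) (l, \<mu>)"
    "\<pi> \<in> poss s" "b = annotated (subt_at s \<pi>)" "flat (subt_at s \<pi>) = subst l \<sigma>"
    "\<forall>u\<in>proper_subterms (subst l \<sigma>). adp_NF (ADPs R) (lift u)"
    "\<nu> = image_mset (\<lambda>(q, r). (q, adp_res True b s \<pi> (sharpD (defined R) r) \<sigma>)) \<mu>"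
    unfolding adp_istep_def by (rule adp_step_at_ADPsE)
  have b: "b"
    using annotated_redex[OF assms(1,2) step(3,1,5)] step(4) by simp
  show ?thesis
    using that[OF step(1,2) b step(3,5)] step(6,7) b
    by (simp add: adp_NF_lift_iff[OF assms(1)] adp_res_def)
qed

lemma adp_istep_ADPs_canonicalI:
  assumes "ptrs F R" and "well_annotated (defined R) R s" and "\<pi> \<in> poss s"
    and "(l, \<mu>) \<in> R" and "flat (subt_at s \<pi>) = subst l \<sigma>"
    and "\<forall>u\<in>proper_subterms (subst l \<sigma>). NF R u"
  shows "adp_istep (ADPs R) s (canonical_adp (defined R) (l, \<mu>)) True
    (image_mset (\<lambda>(q, r). (q, replace_at s \<pi> (subst (sharpD (defined R) r) (lift \<circ> \<sigma>)))) \<mu>)"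
proof -
  have "annotated (subt_at s \<pi>)"
    using assms(1-5) by (rule annotated_redex)
  moreover have "\<forall>u\<in>proper_subterms (subst l \<sigma>). adp_NF (ADPs R) (lift u)"
    using assms(6) by (simp add: adp_NF_lift_iff[OF assms(1)])
  ultimately show ?thesis
    using adp_step_at_canonicalI[OF assms(1,4,3,5), of "adp_NF (ADPs R)"]
    unfolding adp_istep_def by (simp add: adp_res_def)
qed

section \<open>Rewrite sequence trees and chain trees\<close>

lemma mset_eq_image_mset_imp_map:
  "mset xs = image_mset f M \<Longrightarrow> \<exists>ys. mset ys = M \<and> map f ys = xs"
proof (induction xs arbitrary: M)
  case Nil
  then show ?case by auto
next
  case (Cons x xs)
  then have "image_mset f M = add_mset x (mset xs)" by simp
  from msed_map_invR[OF this] obtain M' a where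
    "M = add_mset a M'" "f a = x" "image_mset f M' = mset xs" by blast
  with Cons.IH[of M'] show ?case by (metis list.simps(9) mset.simps(2))
qed

lemma tree_shape_snocD: "tree_shape N k \<Longrightarrow> v @ [i] \<in> N \<Longrightarrow> v \<in> N \<and> i < k v"
  unfolding tree_shape_def by blast

lemma children_mset_memI:
  "tree_shape N k \<Longrightarrow> v @ [i] \<in> N \<Longrightarrow> (p (v @ [i]) / p v, t (v @ [i])) \<in># children_mset p t k v"
  unfolding tree_shape_def children_mset_def by auto

lemma children_mset_comp:
  "children_mset p (f \<circ> t) k v = image_mset (apsnd f) (children_mset p t k v)"
  unfolding children_mset_def by (simp add: multiset.map_comp comp_def)

lemma children_mset_eq_image_mset_iff:
  "children_mset p t k v = image_mset g M \<longleftrightarrow>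
     (\<exists>rs. mset rs = M \<and> length rs = k v \<and>
        (\<forall>i < k v. (p (v @ [i]) / p v, t (v @ [i])) = g (rs ! i)))"
proof -
  let ?cs = "map (\<lambda>i. (p (v @ [i]) / p v, t (v @ [i]))) [0..<k v]"
  have "children_mset p t k v = image_mset g M \<longleftrightarrow> (\<exists>rs. mset rs = M \<and> map g rs = ?cs)"
  proof
    show "children_mset p t k v = image_mset g M \<Longrightarrow> \<exists>rs. mset rs = M \<and> map g rs = ?cs"
      unfolding children_mset_def by (rule mset_eq_image_mset_imp_map)
    show "\<exists>rs. mset rs = M \<and> map g rs = ?cs \<Longrightarrow> children_mset p t k v = image_mset g M"
      unfolding children_mset_def by (auto simp flip: mset_map)
  qed
  also have "\<dots> \<longleftrightarrow> (\<exists>rs. mset rs = M \<and> length rs = k v \<and>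
      (\<forall>i < k v. (p (v @ [i]) / p v, t (v @ [i])) = g (rs ! i)))"
    by (intro ex_cong1 conj_cong refl) (auto simp: list_eq_iff_nth_eq)
  finally show ?thesis .
qed

lemma edl_adp_eq_edl:
  assumes "\<And>v. v \<in> N \<Longrightarrow> 1 \<le> k v \<Longrightarrow> snd (lab v) \<and> fst (lab v) \<in> S"
  shows "edl_adp S N p k lab = edl N p k"
proof -
  have "{v \<in> N. 1 \<le> k v \<and> snd (lab v) \<and> fst (lab v) \<in> S} = {v \<in> N. 1 \<le> k v}"
    using assms by blast
  then show ?thesis
    unfolding edl_adp_def edl_def by simp
qed

lemma chain_tree_well_annotated:
  assumes ptrs: "ptrs F R" and chain: "chain_tree (ADPs R) N p t k lab"
    and root: "t [] = sharp_root s" and basic: "s \<in> basic_terms F (defined R)"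
  shows "v \<in> N \<Longrightarrow> well_annotated (defined R) R (t v)"
proof (induction v rule: rev_induct)
  case Nil
  show ?case
    using root well_annotated_sharp_root[OF basic] by simp
next
  case (snoc i v)
  have shape: "tree_shape N k"
    using chain unfolding chain_tree_def by blast
  have v: "v \<in> N" "1 \<le> k v"
    using tree_shape_snocD[OF shape snoc.prems] by auto
  have IH: "well_annotated (defined R) R (t v)"
    using snoc.IH v(1) .
  have "adp_istep (ADPs R) (t v) (fst (lab v)) (snd (lab v)) (children_mset p t k v)"
    using chain v unfolding chain_tree_def by blast
  then obtain l \<mu> \<pi> \<sigma> where redex: "(l, \<mu>) \<in> R" "\<pi> \<in> poss (t v)"
    "flat (subt_at (t v) \<pi>) = subst l \<sigma>" "\<forall>u\<in>proper_subterms (subst l \<sigma>). NF R u"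
    and children: "children_mset p t k v =
      image_mset (\<lambda>(q, r). (q, replace_at (t v) \<pi> (subst (sharpD (defined R) r) (lift \<circ> \<sigma>)))) \<mu>"
    by (rule adp_istep_ADPs_well_annotatedE[OF ptrs IH])
  obtain q r where "(q, r) \<in># \<mu>"
    and "t (v @ [i]) = replace_at (t v) \<pi> (subst (sharpD (defined R) r) (lift \<circ> \<sigma>))"
    using children_mset_memI[OF shape snoc.prems, of p t] unfolding children by auto
  then show ?case
    using well_annotated_rewrite[OF ptrs IH redex(2,1,3,4)] by simp
qed

lemma chain_tree_flat_RST:
  assumes ptrs: "ptrs F R" and chain: "chain_tree (ADPs R) N p t k lab"
    and root: "t [] = sharp_root s" and basic: "s \<in> basic_terms F (defined R)"
  shows "RST R N p (flat \<circ> t) k" and "edl_adp (ADPs R) N p k lab = edl N p k"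
proof -
  have flat_step: "istep R ((flat \<circ> t) v) (children_mset p (flat \<circ> t) k v)"
    and lab: "snd (lab v) \<and> fst (lab v) \<in> ADPs R" if v: "v \<in> N" "1 \<le> k v" for v
  proof -
    have "adp_istep (ADPs R) (t v) (fst (lab v)) (snd (lab v)) (children_mset p t k v)"
      using chain v unfolding chain_tree_def by blast
    then obtain l \<mu> \<pi> \<sigma> where redex: "(l, \<mu>) \<in> R" "fst (lab v) = canonical_adp (defined R) (l, \<mu>)"
      "snd (lab v)" "\<pi> \<in> poss (t v)" "flat (subt_at (t v) \<pi>) = subst l \<sigma>"
      "\<forall>u\<in>proper_subterms (subst l \<sigma>). NF R u"
      and children: "children_mset p t k v =
        image_mset (\<lambda>(q, r). (q, replace_at (t v) \<pi> (subst (sharpD (defined R) r) (lift \<circ> \<sigma>)))) \<mu>"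
      by (rule adp_istep_ADPs_well_annotatedE[OF ptrs
            chain_tree_well_annotated[OF ptrs chain root basic v(1)]])
    show "snd (lab v) \<and> fst (lab v) \<in> ADPs R"
      using redex(1-3) canonical_adp_in_ADPs by simp
    have "children_mset p (flat \<circ> t) k v =
        image_mset (\<lambda>(q, r). (q, replace_at (flat (t v)) \<pi> (subst r \<sigma>))) \<mu>"
      unfolding children_mset_comp children
      by (auto simp: multiset.map_comp intro!: image_mset_cong)
    then show "istep R ((flat \<circ> t) v) (children_mset p (flat \<circ> t) k v)"
      unfolding istep_def using redex(1,4-6) by (auto simp: subt_at_flat)
  qed
  show "RST R N p (flat \<circ> t) k"
    using chain flat_step unfolding chain_tree_def RST_def by auto
  show "edl_adp (ADPs R) N p k lab = edl N p k"
    using lab by (rule edl_adp_eq_edl)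
qed

type_synonym ('f, 'v) contraction =
  "nat list \<times> ('f, 'v) trm \<times> (real \<times> ('f, 'v) trm) multiset \<times> ('v \<Rightarrow> ('f, 'v) trm) \<times>
   (real \<times> ('f, 'v) trm) list"

text \<open>The step of an RST at node v applies the rule (l, \<mu>) at position \<pi> with matcher \<sigma>,
  and rs enumerates \<mu> in the order of the children of v.\<close>
definition contracts :: "('f, 'v) prule set \<Rightarrow> (nat list \<Rightarrow> real) \<Rightarrow> (nat list \<Rightarrow> ('f, 'v) trm) \<Rightarrow>
    (nat list \<Rightarrow> nat) \<Rightarrow> nat list \<Rightarrow> ('f, 'v) contraction \<Rightarrow> bool" where
  "contracts R p t k v c \<longleftrightarrow> (case c of (\<pi>, l, \<mu>, \<sigma>, rs) \<Rightarrow>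
     \<pi> \<in> poss (t v) \<and> (l, \<mu>) \<in> R \<and> subt_at (t v) \<pi> = subst l \<sigma> \<and>
     (\<forall>u\<in>proper_subterms (subst l \<sigma>). NF R u) \<and> mset rs = \<mu> \<and> length rs = k v \<and>
     (\<forall>i < k v. p (v @ [i]) / p v = fst (rs ! i) \<and>
        t (v @ [i]) = replace_at (t v) \<pi> (subst (snd (rs ! i)) \<sigma>)))"

lemma RST_ex_contracts:
  assumes "RST R N p t k" and "v \<in> N" and "1 \<le> k v"
  shows "\<exists>c. contracts R p t k v c"
proof -
  obtain \<pi> l \<mu> \<sigma> where redex: "\<pi> \<in> poss (t v)" "(l, \<mu>) \<in> R" "subt_at (t v) \<pi> = subst l \<sigma>"
    "\<forall>u\<in>proper_subterms (subst l \<sigma>). NF R u"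
    and "children_mset p t k v = image_mset (\<lambda>(q, r). (q, replace_at (t v) \<pi> (subst r \<sigma>))) \<mu>"
    using assms unfolding RST_def istep_def by blast
  then obtain rs where "mset rs = \<mu>" "length rs = k v"
    "\<forall>i < k v. (p (v @ [i]) / p v, t (v @ [i])) =
       (fst (rs ! i), replace_at (t v) \<pi> (subst (snd (rs ! i)) \<sigma>))"
    unfolding children_mset_eq_image_mset_iff by (auto simp: case_prod_beta)
  then have "contracts R p t k v (\<pi>, l, \<mu>, \<sigma>, rs)"
    unfolding contracts_def using redex by simp
  then show ?thesis
    by blast
qed

text \<open>Applied to the reversed address of a node v, this computes the label of v from the
  root label a, where g w i maps the label of a node w to the label of its child w @ [i].\<close>
fun fold_rev_path :: "(nat list \<Rightarrow> nat \<Rightarrow> 'a \<Rightarrow> 'a) \<Rightarrow> 'a \<Rightarrow> nat list \<Rightarrow> 'a" where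
  "fold_rev_path g a [] = a"
| "fold_rev_path g a (i # w) = g (rev w) i (fold_rev_path g a w)"

definition annotate_RST :: "('f \<times> nat) set \<Rightarrow> (nat list \<Rightarrow> ('f, 'v) contraction) \<Rightarrow> ('f, 'v) trm \<Rightarrow>
    nat list \<Rightarrow> ('f \<times> bool, 'v) trm" where
  "annotate_RST D W s v = fold_rev_path (\<lambda>w i x. case W w of (\<pi>, l, \<mu>, \<sigma>, rs) \<Rightarrow>
      replace_at x \<pi> (subst (sharpD D (snd (rs ! i))) (lift \<circ> \<sigma>))) (sharp_root s) (rev v)"

lemma annotate_RST_Nil[simp]: "annotate_RST D W s [] = sharp_root s"
  unfolding annotate_RST_def by simp

lemma annotate_RST_snoc:
  "W v = (\<pi>, l, \<mu>, \<sigma>, rs) \<Longrightarrow>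
     annotate_RST D W s (v @ [i]) =
       replace_at (annotate_RST D W s v) \<pi> (subst (sharpD D (snd (rs ! i))) (lift \<circ> \<sigma>))"
  unfolding annotate_RST_def by simp

lemma annotate_RST_flat_well_annotated:
  assumes ptrs: "ptrs F R" and rst: "RST R N p t k" and root: "t [] = s"
    and basic: "s \<in> basic_terms F (defined R)"
    and W: "\<And>w. w \<in> N \<Longrightarrow> 1 \<le> k w \<Longrightarrow> contracts R p t k w (W w)"
  shows "v \<in> N \<Longrightarrow> flat (annotate_RST (defined R) W s v) = t v \<and>
    well_annotated (defined R) R (annotate_RST (defined R) W s v)"
proof (induction v rule: rev_induct)
  case Nil
  show ?case
    using root well_annotated_sharp_root[OF basic] by simp
next
  case (snoc i v)
  let ?t' = "annotate_RST (defined R) W s"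
  have "tree_shape N k"
    using rst unfolding RST_def by blast
  then have v: "v \<in> N" "i < k v"
    using tree_shape_snocD snoc.prems by blast+
  then have IH: "flat (?t' v) = t v" "well_annotated (defined R) R (?t' v)"
    using snoc.IH by auto
  obtain \<pi> l \<mu> \<sigma> rs where Wv: "W v = (\<pi>, l, \<mu>, \<sigma>, rs)"
    by (cases "W v") auto
  then have c: "\<pi> \<in> poss (t v)" "(l, \<mu>) \<in> R" "subt_at (t v) \<pi> = subst l \<sigma>"
    "\<forall>u\<in>proper_subterms (subst l \<sigma>). NF R u" "mset rs = \<mu>" "length rs = k v"
    "t (v @ [i]) = replace_at (t v) \<pi> (subst (snd (rs ! i)) \<sigma>)"
    using W[of v] v unfolding contracts_def by auto
  have "(fst (rs ! i), snd (rs ! i)) \<in># \<mu>"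
    using c(5,6) v(2) by (metis nth_mem prod.collapse set_mset_mset)
  moreover have "\<pi> \<in> poss (?t' v)" "flat (subt_at (?t' v) \<pi>) = subst l \<sigma>"
    using c(1,3) IH(1) by (metis poss_flat subt_at_flat)+
  ultimately have "well_annotated (defined R) R (?t' (v @ [i]))"
    unfolding annotate_RST_snoc[of W v, OF Wv]
    using well_annotated_rewrite[OF ptrs IH(2) _ c(2) _ c(4)] by blast
  moreover have "flat (?t' (v @ [i])) = t (v @ [i])"
    unfolding annotate_RST_snoc[of W v, OF Wv] c(7) by (simp add: IH(1))
  ultimately show ?case
    by simp
qed

lemma annotate_RST_adp_istep:
  assumes ptrs: "ptrs F R" and c: "contracts R p t k v (W v)" and "W v = (\<pi>, l, \<mu>, \<sigma>, rs)"
    and flat: "flat (annotate_RST (defined R) W s v) = t v"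
    and well_annotated: "well_annotated (defined R) R (annotate_RST (defined R) W s v)"
  shows "adp_istep (ADPs R) (annotate_RST (defined R) W s v) (canonical_adp (defined R) (l, \<mu>)) True
    (children_mset p (annotate_RST (defined R) W s) k v)"
proof -
  let ?t' = "annotate_RST (defined R) W s"
  have redex: "\<pi> \<in> poss (t v)" "(l, \<mu>) \<in> R" "subt_at (t v) \<pi> = subst l \<sigma>"
    "\<forall>u\<in>proper_subterms (subst l \<sigma>). NF R u" "mset rs = \<mu>" "length rs = k v"
    "\<forall>i < k v. p (v @ [i]) / p v = fst (rs ! i)"
    using c unfolding contracts_def \<open>W v = _\<close> by auto
  have "children_mset p ?t' k v =
      image_mset (\<lambda>(q, r). (q, replace_at (?t' v) \<pi> (subst (sharpD (defined R) r) (lift \<circ> \<sigma>)))) \<mu>"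
    unfolding children_mset_eq_image_mset_iff using redex(5-7)
    by (intro exI[of _ rs]) (simp add: annotate_RST_snoc[of W v, OF \<open>W v = _\<close>] case_prod_beta)
  moreover have "\<pi> \<in> poss (?t' v)" "flat (subt_at (?t' v) \<pi>) = subst l \<sigma>"
    using redex(1,3) flat by (metis poss_flat subt_at_flat)+
  ultimately show ?thesis
    using adp_istep_ADPs_canonicalI[OF ptrs well_annotated _ redex(2) _ redex(4)] by simp
qed

lemma RST_annotate:
  assumes ptrs: "ptrs F R" and rst: "RST R N p t k" and root: "t [] = s"
    and basic: "s \<in> basic_terms F (defined R)"
  obtains t' lab where "chain_tree (ADPs R) N p t' k lab" and "t' [] = sharp_root s"
    and "edl_adp (ADPs R) N p k lab = edl N p k"
proof -
  have "\<forall>v. \<exists>c. v \<in> N \<and> 1 \<le> k v \<longrightarrow> contracts R p t k v c"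
    using RST_ex_contracts[OF rst] by blast
  then obtain W where W: "\<And>v. v \<in> N \<Longrightarrow> 1 \<le> k v \<Longrightarrow> contracts R p t k v (W v)"
    by metis
  define lab where
    "lab v = (case W v of (\<pi>, l, \<mu>, \<sigma>, rs) \<Rightarrow> (canonical_adp (defined R) (l, \<mu>), True))" for v
  let ?t' = "annotate_RST (defined R) W s"
  have chain_step:
      "adp_istep (ADPs R) (?t' v) (fst (lab v)) (snd (lab v)) (children_mset p ?t' k v)"
    and lab: "snd (lab v) \<and> fst (lab v) \<in> ADPs R" if v: "v \<in> N" "1 \<le> k v" for v
  proof -
    obtain \<pi> l \<mu> \<sigma> rs where Wv: "W v = (\<pi>, l, \<mu>, \<sigma>, rs)"
      by (cases "W v") auto
    then have "(l, \<mu>) \<in> R"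
      using W[OF v] unfolding contracts_def by simp
    then show "snd (lab v) \<and> fst (lab v) \<in> ADPs R"
      by (simp add: lab_def Wv canonical_adp_in_ADPs)
    show "adp_istep (ADPs R) (?t' v) (fst (lab v)) (snd (lab v)) (children_mset p ?t' k v)"
      using annotate_RST_adp_istep[where W = W and v = v, OF ptrs W[OF v] Wv]
        annotate_RST_flat_well_annotated[OF ptrs rst root basic W v(1)]
      by (simp add: lab_def Wv)
  qed
  show ?thesis
  proof
    show "chain_tree (ADPs R) N p ?t' k lab"
      using rst chain_step unfolding chain_tree_def RST_def by auto
    show "?t' [] = sharp_root s"
      by simp
    show "edl_adp (ADPs R) N p k lab = edl N p k"
      using lab by (rule edl_adp_eq_edl)
  qed
qed

section \<open>Derivation heights\<close>

lemma edh_eq_edh_adp: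
  assumes "ptrs F R" and "s \<in> basic_terms F (defined R)"
  shows "edh R s = edh_adp (ADPs R) (ADPs R) s"
  unfolding edh_def edh_adp_def
proof (rule SUP_eq)
  fix x
  assume "x \<in> {(N, p, t, k). RST R N p t k \<and> t [] = s}"
  then obtain N p t k where x: "x = (N, p, t, k)" "RST R N p t k" "t [] = s"
    by auto
  then obtain t' lab where "chain_tree (ADPs R) N p t' k lab" "t' [] = sharp_root s"
    "edl_adp (ADPs R) N p k lab = edl N p k"
    using RST_annotate[OF assms(1) _ _ assms(2)] by metis
  then show "\<exists>y\<in>{(N, p, t, k, lab). chain_tree (ADPs R) N p t k lab \<and> t [] = sharp_root s}.
      (case x of (N, p, t, k) \<Rightarrow> edl N p k) \<le>
      (case y of (N, p, t, k, lab) \<Rightarrow> edl_adp (ADPs R) N p k lab)"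
    by (intro bexI[of _ "(N, p, t', k, lab)"]) (simp_all add: x(1))
next
  fix y
  assume "y \<in> {(N, p, t, k, lab). chain_tree (ADPs R) N p t k lab \<and> t [] = sharp_root s}"
  then obtain N p t k lab where y: "y = (N, p, t, k, lab)" "chain_tree (ADPs R) N p t k lab"
    "t [] = sharp_root s"
    by auto
  then show "\<exists>x\<in>{(N, p, t, k). RST R N p t k \<and> t [] = s}.
      (case y of (N, p, t, k, lab) \<Rightarrow> edl_adp (ADPs R) N p k lab) \<le>
      (case x of (N, p, t, k) \<Rightarrow> edl N p k)"
    using chain_tree_flat_RST[OF assms(1) y(2,3) assms(2)]
    by (intro bexI[of _ "(N, p, flat \<circ> t, k)"]) simp_all
qed

lemma eirc_eq_eirc_adp:
  assumes "ptrs F R"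
  shows "eirc F R = eirc_adp F (ADPs R) (ADPs R)"
  unfolding eirc_def eirc_adp_def adefined_ADPs
  by (intro ext SUP_cong) (simp_all add: edh_eq_edh_adp[OF assms])

theorem mainTheorem1:
  fixes F :: "('f \<times> nat) set" and R :: "('f, 'v) prule set"
  assumes "finite F" and "ptrs F R"
  shows "(\<forall>t \<in> basic_terms F (defined R). edh R t = edh_adp (ADPs R) (ADPs R) t)
         \<and> iota (eirc F R) = iota (eirc_adp F (ADPs R) (ADPs R))"
  using edh_eq_edh_adp[OF assms(2)] eirc_eq_eirc_adp[OF assms(2)] by simp

end
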